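(* Let $X,Y$ be infinite dimensional Banach lattices which are relatively $s$-decomposable for some $1\le s\le\infty$. If $a=(a_i)\in X_L$ and $b=(b_i)\in\ell_s$, then $ab:=(a_ib_i)\in Y_U$ and $$\|ab\|_{Y_U}\le D_s(X,Y)\,\|b\|_{\ell_s}\,\|a\|_{X_L}.$$
   Context: Banach lattices are real; disjoint means $|x|\wedge|y|=0$. $X,Y$ are relatively $s$-decomposable if there is $D$ with $\|\sum_{i=1}^n y_i\|_Y\le D(\sum_i(\|y_i\|_Y/\|x_i\|_X)^s)^{1/s}\|\sum_{i=1}^n x_i\|_X$ for all $n$ and all pairwise disjoint nonzero $x_1,\dots,x_n\in X$, pairwise disjoint nonzero $y_1,\dots,y_n\in Y$ (max for $s=\infty$); $D_s(X,Y)$ is the infimum of such $D$. $\mathfrak B_n(X)$ is the set of $n$-tuples of pairwise disjoint norm-one elements of $X$. For $a\in\mathbb R^n$: $\|a\|_{X_U(n)}:=\sup\{\|\sum_{i=1}^n a_ix_i\|_X:(x_i)\in\mathfrak B_n(X)\}$; $\Phi_n(a):=\inf\{\|\sum_{i=1}^n a_ix_i\|_X:(x_i)\in\mathfrak B_n(X)\}$; $\|a\|_{X_L(n)}:=\inf\{\sum_{k\in F}\Phi_n(a^k): F\text{ finite}, a^k\in\mathbb R^n, a=\sum_{k\in F}a^k\}$. $X_U$ (resp. $X_L$) is the space of real sequences $a$ with $\|a\|_{X_U}:=\sup_n\|(a_i)_{i=1}^n\|_{X_U(n)}<\infty$ (resp. $\|a\|_{X_L}:=\sup_n\|(a_i)_{i=1}^n\|_{X_L(n)}<\infty$);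 $Y_U$ is defined likewise from $Y$. *)

theory Defs
  imports "HOL-Analysis.Analysis"
begin

definition lat_abs :: "'a::{lattice,uminus} \<Rightarrow> 'a" where
  "lat_abs x = sup x (- x)"

class banach_lattice = banach + ordered_real_vector + lattice +
  assumes lattice_norm: "sup x (- x) \<le> sup y (- y) \<Longrightarrow> norm x \<le> norm y"

definition lat_disjoint :: "'a::banach_lattice \<Rightarrow> 'a \<Rightarrow> bool" where
  "lat_disjoint x y \<longleftrightarrow> inf (lat_abs x) (lat_abs y) = 0"

definition infinite_dimensional :: "'a::real_vector itself \<Rightarrow> bool" where
  "infinite_dimensional (_::'a itself) \<longleftrightarrow> \<not> (\<exists>B::'a set. finite B \<and> span B = UNIV)"

definition disj_nonzero :: "nat \<Rightarrow> (nat \<Rightarrow> 'a::banach_lattice) \<Rightarrow> bool" where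
  "disj_nonzero n x \<longleftrightarrow> (\<forall>i<n. x i \<noteq> 0) \<and>
     (\<forall>i<n. \<forall>j<n. i \<noteq> j \<longrightarrow> lat_disjoint (x i) (x j))"

definition s_comb :: "ereal \<Rightarrow> nat \<Rightarrow> (nat \<Rightarrow> real) \<Rightarrow> real" where
  "s_comb s n t = (if s = \<infinity> then Max (insert 0 (t ` {..<n}))
     else (\<Sum>i<n. t i powr real_of_ereal s) powr (1 / real_of_ereal s))"

definition rel_decomp_const ::
  "'a::banach_lattice itself \<Rightarrow> 'b::banach_lattice itself \<Rightarrow> ereal \<Rightarrow> real \<Rightarrow> bool" where
  "rel_decomp_const (_::'a itself) (_::'b itself) s D \<longleftrightarrow>
     (\<forall>n. \<forall>(x::nat \<Rightarrow> 'a) (y::nat \<Rightarrow> 'b). disj_nonzero n x \<longrightarrow> disj_nonzero n y \<longrightarrow>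
        norm (\<Sum>i<n. y i) \<le> D * s_comb s n (\<lambda>i. norm (y i) / norm (x i)) * norm (\<Sum>i<n. x i))"

definition rel_s_decomposable ::
  "'a::banach_lattice itself \<Rightarrow> 'b::banach_lattice itself \<Rightarrow> ereal \<Rightarrow> bool" where
  "rel_s_decomposable TA TB s \<longleftrightarrow> (\<exists>D. rel_decomp_const TA TB s D)"

definition D_s ::
  "'a::banach_lattice itself \<Rightarrow> 'b::banach_lattice itself \<Rightarrow> ereal \<Rightarrow> real" where
  "D_s TA TB s = Inf {D. rel_decomp_const TA TB s D}"

definition frakB :: "'a::banach_lattice itself \<Rightarrow> nat \<Rightarrow> (nat \<Rightarrow> 'a) set" where
  "frakB (_::'a itself) n = {x. (\<forall>i<n. norm (x i) = 1) \<and>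
     (\<forall>i<n. \<forall>j<n. i \<noteq> j \<longrightarrow> lat_disjoint (x i) (x j))}"

definition XU_n :: "'a::banach_lattice itself \<Rightarrow> nat \<Rightarrow> (nat \<Rightarrow> real) \<Rightarrow> real" where
  "XU_n TA n a = (SUP x\<in>frakB TA n. norm (\<Sum>i<n. a i *\<^sub>R x i))"

definition Phi_n :: "'a::banach_lattice itself \<Rightarrow> nat \<Rightarrow> (nat \<Rightarrow> real) \<Rightarrow> real" where
  "Phi_n TA n a = (INF x\<in>frakB TA n. norm (\<Sum>i<n. a i *\<^sub>R x i))"

definition XL_n :: "'a::banach_lattice itself \<Rightarrow> nat \<Rightarrow> (nat \<Rightarrow> real) \<Rightarrow> real" where
  "XL_n TA n a = Inf {\<Sum>k\<in>F. Phi_n TA n (c k) | F c. finite (F::nat set) \<and>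
                       (\<forall>i<n. a i = (\<Sum>k\<in>F. c k i))}"

definition in_XU :: "'a::banach_lattice itself \<Rightarrow> (nat \<Rightarrow> real) \<Rightarrow> bool" where
  "in_XU TA a \<longleftrightarrow> bdd_above (range (\<lambda>n. XU_n TA n a))"

definition norm_XU :: "'a::banach_lattice itself \<Rightarrow> (nat \<Rightarrow> real) \<Rightarrow> real" where
  "norm_XU TA a = (SUP n. XU_n TA n a)"

definition in_XL :: "'a::banach_lattice itself \<Rightarrow> (nat \<Rightarrow> real) \<Rightarrow> bool" where
  "in_XL TA a \<longleftrightarrow> bdd_above (range (\<lambda>n. XL_n TA n a))"

definition norm_XL :: "'a::banach_lattice itself \<Rightarrow> (nat \<Rightarrow> real) \<Rightarrow> real" where
  "norm_XL TA a = (SUP n. XL_n TA n a)"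

definition in_lp :: "ereal \<Rightarrow> (nat \<Rightarrow> real) \<Rightarrow> bool" where
  "in_lp s b \<longleftrightarrow> (if s = \<infinity> then bdd_above (range (\<lambda>i. \<bar>b i\<bar>))
     else summable (\<lambda>i. \<bar>b i\<bar> powr real_of_ereal s))"

definition norm_lp :: "ereal \<Rightarrow> (nat \<Rightarrow> real) \<Rightarrow> real" where
  "norm_lp s b = (if s = \<infinity> then (SUP i. \<bar>b i\<bar>)
     else (\<Sum>i. \<bar>b i\<bar> powr real_of_ereal s) powr (1 / real_of_ereal s))"

end

theory Submission
  imports Defs "HOL-Library.Lattice_Algebras"
begin

text \<open>Fix disjoint norm-one \<open>y\<^sub>1, \<dots>, y\<^sub>n\<close> in \<open>Y\<close>, a decomposition \<open>a = \<Sum>\<^sub>k c\<^sup>k\<close> and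
  disjoint norm-one \<open>x\<^sub>1, \<dots>, x\<^sub>n\<close> in \<open>X\<close>. Applying relative decomposability to the disjoint
  tuples \<open>(c\<^sub>i x\<^sub>i)\<close> and \<open>(c\<^sub>i b\<^sub>i y\<^sub>i)\<close>, whose norm ratios are \<open>\<bar>b\<^sub>i\<bar>\<close>, gives
  \<open>\<parallel>\<Sum> c\<^sub>i b\<^sub>i y\<^sub>i\<parallel> \<le> D \<parallel>b\<parallel>\<^sub>s \<parallel>\<Sum> c\<^sub>i x\<^sub>i\<parallel>\<close>. Taking the infimum over \<open>x\<close> gives
  \<open>D \<parallel>b\<parallel>\<^sub>s \<Phi>\<^sub>n(c)\<close>; summing over \<open>k\<close> and taking the infimum over decompositions gives
  \<open>D \<parallel>b\<parallel>\<^sub>s \<parallel>a\<parallel>\<^sub>X\<^sub>L\<close>, uniformly in \<open>n\<close> and \<open>y\<close>.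

  Infinite dimensionality is needed only to make the sets \<open>\<frakB>\<^sub>n\<close> nonempty, so that the
  infima and suprema are not junk values: a maximal disjoint system of nonzero elements
  consists of atoms, each atom splits off a multiple of itself from every positive element,
  and hence a finite maximal system would span the space.\<close>

context banach_lattice begin
subclass lattice_ab_group_add ..
end

section \<open>Vector lattice facts\<close>

lemma scaleR_inf_distrib:
  fixes a b :: "'a::banach_lattice"
  assumes "0 \<le> c"
  shows "c *\<^sub>R inf a b = inf (c *\<^sub>R a) (c *\<^sub>R b)"
proof (cases "c = 0")
  case False
  with assms have c: "0 < c" by simp
  show ?thesis
  proof (rule antisym)
    show "c *\<^sub>R inf a b \<le> inf (c *\<^sub>R a) (c *\<^sub>R b)"
      using assms by (simp add: scaleR_left_mono)
    have "(1/c) *\<^sub>R inf (c *\<^sub>R a) (c *\<^sub>R b) \<le> (1/c) *\<^sub>R (c *\<^sub>R a)"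
      and "(1/c) *\<^sub>R inf (c *\<^sub>R a) (c *\<^sub>R b) \<le> (1/c) *\<^sub>R (c *\<^sub>R b)"
      using c by (intro scaleR_left_mono; simp)+
    with c have "(1/c) *\<^sub>R inf (c *\<^sub>R a) (c *\<^sub>R b) \<le> inf a b"
      by simp
    then have "c *\<^sub>R ((1/c) *\<^sub>R inf (c *\<^sub>R a) (c *\<^sub>R b)) \<le> c *\<^sub>R inf a b"
      using assms by (rule scaleR_left_mono)
    with c show "inf (c *\<^sub>R a) (c *\<^sub>R b) \<le> c *\<^sub>R inf a b"
      by simp
  qed
qed simp

lemma scaleR_sup_distrib:
  fixes a b :: "'a::banach_lattice"
  assumes "0 \<le> c"
  shows "c *\<^sub>R sup a b = sup (c *\<^sub>R a) (c *\<^sub>R b)"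
proof -
  have "c *\<^sub>R sup a b = - (c *\<^sub>R inf (- a) (- b))"
    by (metis neg_inf_eq_sup minus_minus scaleR_minus_right)
  also have "\<dots> = sup (c *\<^sub>R a) (c *\<^sub>R b)"
    by (simp add: scaleR_inf_distrib[OF assms] neg_inf_eq_sup)
  finally show ?thesis .
qed

lemma lat_abs_nonneg: "0 \<le> lat_abs (x::'a::banach_lattice)"
proof -
  have "x + - x \<le> lat_abs x + lat_abs x"
    by (intro add_mono) (simp_all add: lat_abs_def)
  then show ?thesis by simp
qed

lemma lat_abs_eq_0_iff [simp]: "lat_abs (x::'a::banach_lattice) = 0 \<longleftrightarrow> x = 0"
  by (simp add: lat_abs_def)

lemma lat_abs_of_nonneg: "0 \<le> (x::'a::banach_lattice) \<Longrightarrow> lat_abs x = x"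
  unfolding lat_abs_def using order_trans[of "-x" 0 x] by (simp add: sup_absorb1)

lemma lat_abs_idem [simp]: "lat_abs (lat_abs (x::'a::banach_lattice)) = lat_abs x"
  by (simp add: lat_abs_of_nonneg lat_abs_nonneg)

lemma lat_abs_minus [simp]: "lat_abs (- x::'a::banach_lattice) = lat_abs x"
  by (simp add: lat_abs_def sup_commute)

lemma lat_abs_scaleR: "lat_abs (c *\<^sub>R x::'a::banach_lattice) = \<bar>c\<bar> *\<^sub>R lat_abs x"
proof (cases "0 \<le> c")
  case False
  then have "c *\<^sub>R x = \<bar>c\<bar> *\<^sub>R (- x)" by simp
  then show ?thesis by (simp add: lat_abs_def scaleR_sup_distrib sup_commute)
qed (simp add: lat_abs_def scaleR_sup_distrib)

lemma lat_abs_triangle: "lat_abs (a + b) \<le> lat_abs a + lat_abs (b::'a::banach_lattice)"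
proof -
  have "a \<le> lat_abs a" "- a \<le> lat_abs a" "b \<le> lat_abs b" "- b \<le> lat_abs b"
    by (auto simp: lat_abs_def)
  then show ?thesis
    unfolding lat_abs_def[of "a + b"] by (metis add_mono minus_add_distrib sup_least)
qed

lemma norm_lat_abs [simp]: "norm (lat_abs (x::'a::banach_lattice)) = norm x"
  by (intro antisym lattice_norm) (metis lat_abs_idem lat_abs_def order_refl)+

lemma norm_mono_nonneg: "0 \<le> (x::'a::banach_lattice) \<Longrightarrow> x \<le> y \<Longrightarrow> norm x \<le> norm y"
  by (rule lattice_norm) (metis lat_abs_def lat_abs_of_nonneg order.trans)

lemma pprt_minus_pprt_uminus: "pprt x - pprt (- x) = (x::'a::banach_lattice)"
  by (metis diff_minus_eq_add pprt_neg prts)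

lemma inf_pprt_pprt_uminus: "inf (pprt x) (pprt (- x)) = (0::'a::banach_lattice)"
proof -
  have "inf (pprt x) (pprt (- x)) = inf (x + pprt (- x)) (pprt (- x))"
    by (metis add.commute diff_add_cancel pprt_minus_pprt_uminus)
  also have "\<dots> = inf x 0 + pprt (- x)"
    by (simp add: add_inf_distrib_right)
  also have "\<dots> = 0"
    by (metis add.right_inverse nprt_def pprt_neg)
  finally show ?thesis .
qed

lemma inf_scaleR_le:
  fixes a b :: "'a::banach_lattice"
  assumes "0 \<le> a" "0 \<le> b" "0 \<le> c"
  shows "inf (c *\<^sub>R a) b \<le> max c 1 *\<^sub>R inf a b"
proof -
  have "inf (c *\<^sub>R a) (1 *\<^sub>R b) \<le> inf (max c 1 *\<^sub>R a) (max c 1 *\<^sub>R b)"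
    using assms by (intro inf_mono scaleR_right_mono) auto
  then show ?thesis
    by (simp add: scaleR_inf_distrib)
qed

lemma inf_scaleR_eq_0:
  fixes a b :: "'a::banach_lattice"
  assumes "0 \<le> a" "0 \<le> b" "0 \<le> c" "inf a b = 0"
  shows "inf (c *\<^sub>R a) b = 0"
  using inf_scaleR_le[OF assms(1-3)] assms by (intro antisym) (simp_all add: scaleR_nonneg_nonneg)

lemma inf_add_nonneg_le:
  fixes a b c :: "'a::banach_lattice"
  assumes "0 \<le> b"
  shows "inf (a + b) c \<le> inf a c + b"
proof -
  have "inf (a + b) c \<le> inf (a + b) (c + b)"
    using assms by (intro inf_mono) auto
  then show ?thesis by (simp add: add_inf_distrib_right)
qed

lemma inf_add_le_add_inf:
  fixes x y e :: "'a::banach_lattice"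
  assumes "0 \<le> x" "0 \<le> y" "0 \<le> e"
  shows "inf (x + y) e \<le> inf x e + inf y e"
proof -
  define z where "z = inf (x + y) e"
  have "z - inf x e = sup (z - x) (z - e)"
    by (simp add: diff_inf_eq_sup add_sup_distrib_left)
  also have "\<dots> \<le> y"
    using assms by (auto simp: z_def algebra_simps le_infI1 le_infI2 intro: order_trans)
  finally have "z - inf x e \<le> y" .
  moreover have "z - inf x e \<le> e"
    using diff_left_mono[of 0 "inf x e" z] assms by (auto simp: z_def intro: order_trans)
  ultimately have "z \<le> inf y e + inf x e"
    by (simp flip: diff_le_eq)
  then show ?thesis by (simp add: z_def add.commute)
qed

lemma inf_lat_abs_add_eq_0:
  fixes a b e :: "'a::banach_lattice"
  assumes "0 \<le> e" "inf (lat_abs a) e = 0" "inf (lat_abs b) e = 0"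
  shows "inf (lat_abs (a + b)) e = 0"
proof (rule antisym)
  have "inf (lat_abs (a + b)) e \<le> inf (lat_abs a + lat_abs b) e"
    by (intro inf_mono lat_abs_triangle) auto
  also have "\<dots> \<le> inf (lat_abs a) e + inf (lat_abs b) e"
    using assms(1) by (intro inf_add_le_add_inf lat_abs_nonneg)
  finally show "inf (lat_abs (a + b)) e \<le> 0"
    using assms by simp
qed (use assms lat_abs_nonneg in simp)

lemma inf_lat_abs_scaleR_eq_0:
  fixes a e :: "'a::banach_lattice"
  shows "0 \<le> e \<Longrightarrow> inf (lat_abs a) e = 0 \<Longrightarrow> inf (lat_abs (c *\<^sub>R a)) e = 0"
  by (simp add: lat_abs_scaleR inf_scaleR_eq_0 lat_abs_nonneg)

lemma inf_lat_abs_sum_eq_0: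
  fixes e :: "'a::banach_lattice"
  assumes "0 \<le> e" "\<And>i. i \<in> I \<Longrightarrow> inf (lat_abs (f i)) e = 0"
  shows "inf (lat_abs (sum f I)) e = 0"
  using assms(2)
proof (induction I rule: infinite_finite_induct)
  case (insert i I)
  then show ?case by (simp add: inf_lat_abs_add_eq_0[OF assms(1)])
qed (use assms(1) in \<open>simp_all add: lat_abs_def inf_absorb1\<close>)

lemma lat_abs_le_lat_abs_add:
  fixes u v :: "'a::banach_lattice"
  assumes "inf (lat_abs u) (lat_abs v) = 0"
  shows "lat_abs u \<le> lat_abs (u + v)"
proof -
  have "lat_abs u \<le> lat_abs (u + v) + lat_abs v"
    using lat_abs_triangle[of "u + v" "- v"] by simp
  then have "lat_abs u = inf (lat_abs (u + v) + lat_abs v) (lat_abs u)"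
    by (simp add: inf_absorb2)
  also have "\<dots> \<le> inf (lat_abs (u + v)) (lat_abs u) + inf (lat_abs v) (lat_abs u)"
    by (intro inf_add_le_add_inf lat_abs_nonneg)
  also have "\<dots> \<le> lat_abs (u + v)"
    using assms by (simp add: inf_commute)
  finally show ?thesis .
qed

lemma lat_disjoint_scaleR:
  fixes u v :: "'a::banach_lattice"
  assumes "lat_disjoint u v"
  shows "lat_disjoint (c *\<^sub>R u) (d *\<^sub>R v)"
proof -
  have "inf (\<bar>d\<bar> *\<^sub>R lat_abs v) (lat_abs u) = 0"
    using assms by (intro inf_scaleR_eq_0) (auto simp: lat_disjoint_def lat_abs_nonneg inf_commute)
  then have "inf (\<bar>c\<bar> *\<^sub>R lat_abs u) (\<bar>d\<bar> *\<^sub>R lat_abs v) = 0"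
    by (intro inf_scaleR_eq_0) (auto simp: lat_abs_nonneg inf_commute scaleR_nonneg_nonneg)
  then show ?thesis
    by (simp add: lat_disjoint_def lat_abs_scaleR)
qed

lemma norm_sum_le_norm_sum_disjoint:
  fixes x :: "nat \<Rightarrow> 'a::banach_lattice"
  assumes disj: "\<And>i j. i < n \<Longrightarrow> j < n \<Longrightarrow> i \<noteq> j \<Longrightarrow> lat_disjoint (x i) (x j)"
    and I: "I \<subseteq> {..<n}"
  shows "norm (\<Sum>i\<in>I. c i *\<^sub>R x i) \<le> norm (\<Sum>i<n. c i *\<^sub>R x i)"
proof -
  define u where "u = (\<Sum>i\<in>I. c i *\<^sub>R x i)"
  define v where "v = (\<Sum>i\<in>{..<n} - I. c i *\<^sub>R x i)"
  have "inf (lat_abs (c i *\<^sub>R x i)) (lat_abs (x j)) = 0" if "i \<in> I" "j \<in> {..<n} - I" for i j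
    using that disj[of i j] I
    by (intro inf_lat_abs_scaleR_eq_0 lat_abs_nonneg) (auto simp: lat_disjoint_def)
  then have "inf (lat_abs (c j *\<^sub>R x j)) (lat_abs u) = 0" if "j \<in> {..<n} - I" for j
    using that unfolding u_def
    by (intro inf_lat_abs_scaleR_eq_0 lat_abs_nonneg)
      (subst inf_commute, intro inf_lat_abs_sum_eq_0 lat_abs_nonneg, auto)
  then have "inf (lat_abs u) (lat_abs v) = 0"
    unfolding v_def by (subst inf_commute) (intro inf_lat_abs_sum_eq_0 lat_abs_nonneg)
  then have "norm (lat_abs u) \<le> norm (lat_abs (u + v))"
    by (intro norm_mono_nonneg lat_abs_nonneg lat_abs_le_lat_abs_add)
  moreover have "(\<Sum>i<n. c i *\<^sub>R x i) = u + v"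
    unfolding u_def v_def using I by (simp add: sum.subset_diff add.commute)
  ultimately show ?thesis by (simp add: u_def)
qed

section \<open>Atoms and disjoint systems\<close>

definition lat_atom :: "'a::banach_lattice \<Rightarrow> bool" where
  "lat_atom e \<longleftrightarrow> 0 \<le> e \<and> e \<noteq> 0 \<and>
     (\<forall>u v. 0 \<le> u \<longrightarrow> u \<le> e \<longrightarrow> 0 \<le> v \<longrightarrow> v \<le> e \<longrightarrow> inf u v = 0 \<longrightarrow> u = 0 \<or> v = 0)"

lemma bdd_above_scaleR_le:
  fixes f p :: "'a::banach_lattice"
  assumes "0 \<le> f" "f \<noteq> 0"
  shows "bdd_above {t. 0 \<le> t \<and> t *\<^sub>R f \<le> p}"
proof (rule bdd_aboveI)
  fix t assume t: "t \<in> {t. 0 \<le> t \<and> t *\<^sub>R f \<le> p}"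
  then have "t * norm f \<le> norm p"
    using norm_mono_nonneg[of "t *\<^sub>R f" p] assms by (simp add: scaleR_nonneg_nonneg)
  with assms show "t \<le> norm p / norm f"
    by (simp add: field_simps)
qed

text \<open>The positive cone is norm closed, so the supremum is attained.\<close>

lemma Sup_scaleR_le:
  fixes f p :: "'a::banach_lattice"
  assumes f: "0 \<le> f" "f \<noteq> 0" and p: "0 \<le> p"
  shows "Sup {t. 0 \<le> t \<and> t *\<^sub>R f \<le> p} *\<^sub>R f \<le> p"
proof -
  define S where "S = {t. 0 \<le> t \<and> t *\<^sub>R f \<le> p}"
  define \<beta> where "\<beta> = Sup S"
  have bdd: "bdd_above S" and "0 \<in> S"
    using bdd_above_scaleR_le[OF f] p by (simp_all add: S_def)
  define w where "w = sup (\<beta> *\<^sub>R f - p) 0"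
  have "norm w \<le> \<epsilon>" if "0 < \<epsilon>" for \<epsilon>
  proof -
    have "\<beta> - \<epsilon> / norm f < Sup S"
      using that f by (simp add: \<beta>_def)
    then obtain t where t: "t \<in> S" "\<beta> - \<epsilon> / norm f < t"
      using less_cSup_iff[of S] \<open>0 \<in> S\<close> bdd by blast
    have "t \<le> \<beta>"
      unfolding \<beta>_def using t(1) bdd by (rule cSup_upper)
    have "\<beta> *\<^sub>R f - p \<le> (\<beta> - t) *\<^sub>R f"
      using t(1) by (simp add: S_def scaleR_diff_left)
    then have "norm w \<le> norm ((\<beta> - t) *\<^sub>R f)"
      using \<open>t \<le> \<beta>\<close> f by (intro norm_mono_nonneg) (simp_all add: w_def scaleR_nonneg_nonneg)
    also have "\<dots> = (\<beta> - t) * norm f"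
      using \<open>t \<le> \<beta>\<close> by simp
    also have "\<dots> \<le> \<epsilon>"
      using t(2) f by (simp add: field_simps)
    finally show ?thesis .
  qed
  then have "w = 0"
    using field_le_epsilon[of "norm w" 0] by simp
  then show ?thesis
    by (metis S_def \<beta>_def diff_le_0_iff_le sup_ge1 w_def)
qed

text \<open>The positive parts of \<open>p - t f\<close> and of \<open>t f - p\<close> cut disjoint pieces out of the atom,
  and the second piece is nonzero when \<open>t f \<le> p\<close> fails.\<close>

lemma lat_atom_inf_pprt_eq_0:
  fixes f p :: "'a::banach_lattice"
  assumes f: "lat_atom f" and "0 \<le> p" "0 \<le> t" and not_le: "\<not> t *\<^sub>R f \<le> p"
  shows "inf (pprt (p - t *\<^sub>R f)) f = 0"
proof -
  have f0: "0 \<le> f" using f by (simp add: lat_atom_def)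
  define W where "W = pprt (t *\<^sub>R f - p)"
  have "inf (inf (pprt (p - t *\<^sub>R f)) f) (inf W f) \<le> inf (pprt (p - t *\<^sub>R f)) W"
    by (intro inf_mono) auto
  also have "\<dots> = 0"
    using inf_pprt_pprt_uminus[of "p - t *\<^sub>R f"] by (simp add: W_def)
  finally have "inf (inf (pprt (p - t *\<^sub>R f)) f) (inf W f) = 0"
    using f0 by (intro antisym) (simp_all add: W_def)
  then have "inf (pprt (p - t *\<^sub>R f)) f = 0 \<or> inf W f = 0"
    using f f0 by (simp add: lat_atom_def W_def)
  moreover have "inf W f \<noteq> 0"
  proof
    assume "inf W f = 0"
    moreover have "W \<le> t *\<^sub>R f"
      using assms f0 by (simp add: W_def pprt_def scaleR_nonneg_nonneg)
    ultimately have "W \<le> max t 1 *\<^sub>R 0"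
      using inf_scaleR_le[OF f0 _ \<open>0 \<le> t\<close>, of W] by (simp add: W_def inf_absorb2 inf_commute)
    with not_le show False
      by (simp add: W_def pprt_def)
  qed
  ultimately show ?thesis by simp
qed

lemma lat_atom_band_decomposition:
  fixes f p :: "'a::banach_lattice"
  assumes f: "lat_atom f" and p: "0 \<le> p"
  shows "\<exists>\<beta>\<ge>0. \<beta> *\<^sub>R f \<le> p \<and> inf (p - \<beta> *\<^sub>R f) f = 0"
proof -
  have f0: "0 \<le> f" "f \<noteq> 0" using f by (simp_all add: lat_atom_def)
  define S where "S = {t. 0 \<le> t \<and> t *\<^sub>R f \<le> p}"
  define \<beta> where "\<beta> = Sup S"
  have bdd: "bdd_above S" and "0 \<in> S"
    using bdd_above_scaleR_le[OF f0] p by (simp_all add: S_def)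
  then have "0 \<le> \<beta>" unfolding \<beta>_def by (simp add: cSup_upper)
  have "\<beta> *\<^sub>R f \<le> p"
    unfolding \<beta>_def S_def using f0 p by (rule Sup_scaleR_le)
  have "norm (inf (p - \<beta> *\<^sub>R f) f) \<le> \<epsilon>" if "0 < \<epsilon>" for \<epsilon>
  proof -
    define t where "t = \<beta> + \<epsilon> / norm f"
    have "\<beta> < t" using that f0 by (simp add: t_def)
    then have "\<not> t *\<^sub>R f \<le> p"
      using cSup_upper[OF _ bdd, of t] \<open>0 \<le> \<beta>\<close> by (auto simp: \<beta>_def S_def)
    have "p - \<beta> *\<^sub>R f = (p - t *\<^sub>R f) + (t - \<beta>) *\<^sub>R f"
      by (simp add: algebra_simps)
    also have "\<dots> \<le> pprt (p - t *\<^sub>R f) + (t - \<beta>) *\<^sub>R f"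
      by (intro add_right_mono) (simp add: pprt_def)
    finally have "p - \<beta> *\<^sub>R f \<le> pprt (p - t *\<^sub>R f) + (t - \<beta>) *\<^sub>R f" .
    then have "inf (p - \<beta> *\<^sub>R f) f \<le> inf (pprt (p - t *\<^sub>R f) + (t - \<beta>) *\<^sub>R f) f"
      by (rule inf_mono) simp
    also have "\<dots> \<le> inf (pprt (p - t *\<^sub>R f)) f + (t - \<beta>) *\<^sub>R f"
      using \<open>\<beta> < t\<close> f0 by (intro inf_add_nonneg_le) (simp add: scaleR_nonneg_nonneg)
    also have "\<dots> = (t - \<beta>) *\<^sub>R f"
      using lat_atom_inf_pprt_eq_0[OF f p] \<open>0 \<le> \<beta>\<close> \<open>\<beta> < t\<close> \<open>\<not> t *\<^sub>R f \<le> p\<close> by simp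
    finally have "norm (inf (p - \<beta> *\<^sub>R f) f) \<le> norm ((t - \<beta>) *\<^sub>R f)"
      using \<open>\<beta> *\<^sub>R f \<le> p\<close> f0 by (intro norm_mono_nonneg) simp_all
    also have "\<dots> = \<epsilon>"
      using that f0 by (simp add: t_def)
    finally show ?thesis .
  qed
  then have "inf (p - \<beta> *\<^sub>R f) f = 0"
    using field_le_epsilon[of "norm (inf (p - \<beta> *\<^sub>R f) f)" 0] by simp
  with \<open>0 \<le> \<beta>\<close> \<open>\<beta> *\<^sub>R f \<le> p\<close> show ?thesis by blast
qed

lemma disj_nonzero_extend:
  assumes "disj_nonzero k x" "z \<noteq> 0" "\<And>i. i < k \<Longrightarrow> lat_disjoint z (x i)"
  shows "disj_nonzero (Suc k) (x(k := z))"
  using assms unfolding disj_nonzero_def lat_disjoint_def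
  by (auto simp: less_Suc_eq inf_commute)

lemma disj_nonzero_split:
  fixes x :: "nat \<Rightarrow> 'a::banach_lattice"
  assumes x: "disj_nonzero k x" and j: "j < k"
    and u: "0 \<le> u" "u \<le> lat_abs (x j)" "u \<noteq> 0" and v: "0 \<le> v" "v \<le> lat_abs (x j)" "v \<noteq> 0"
    and uv: "inf u v = 0"
  shows "disj_nonzero (Suc k) (x(j := u, k := v))"
proof -
  have below: "lat_disjoint w (x l)" if "0 \<le> w" "w \<le> lat_abs (x j)" "l < k" "l \<noteq> j" for w l
  proof -
    have "inf w (lat_abs (x l)) \<le> inf (lat_abs (x j)) (lat_abs (x l))"
      using that by (intro inf_mono) auto
    also have "\<dots> = 0"
      using x that j by (simp add: disj_nonzero_def lat_disjoint_def)
    finally show ?thesis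
      using that lat_abs_nonneg[of "x l"] by (simp add: lat_disjoint_def lat_abs_of_nonneg antisym)
  qed
  have "disj_nonzero k (x(j := u))"
    using x j u below unfolding disj_nonzero_def
    by (auto simp: lat_disjoint_def inf_commute)
  then show ?thesis
    using v uv below j u by (intro disj_nonzero_extend)
      (auto simp: lat_disjoint_def lat_abs_of_nonneg inf_commute)
qed

lemma disj_nonzero_maximal_span:
  fixes x :: "nat \<Rightarrow> 'a::banach_lattice"
  assumes x: "disj_nonzero k x" and maximal: "\<nexists>y::nat \<Rightarrow> 'a. disj_nonzero (Suc k) y"
  shows "span ((\<lambda>i. lat_abs (x i)) ` {..<k}) = UNIV"
proof -
  define e where "e i = lat_abs (x i)" for i
  have e0: "0 \<le> e i" for i by (simp add: e_def lat_abs_nonneg)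
  have atom: "lat_atom (e j)" if j: "j < k" for j
    unfolding lat_atom_def
  proof (intro conjI allI impI)
    show "0 \<le> e j" "e j \<noteq> 0"
      using x j by (simp_all add: e_def lat_abs_nonneg disj_nonzero_def)
    fix u v assume "0 \<le> u" "u \<le> e j" "0 \<le> v" "v \<le> e j" "inf u v = 0"
    then show "u = 0 \<or> v = 0"
      using disj_nonzero_split[OF x j, of u v] maximal unfolding e_def by blast
  qed
  have pos: "p \<in> span (e ` {..<k})" if "0 \<le> p" for p
  proof -
    obtain \<beta> where \<beta>: "\<And>j. j < k \<Longrightarrow> \<beta> j *\<^sub>R e j \<le> p \<and> inf (p - \<beta> j *\<^sub>R e j) (e j) = 0"
      using lat_atom_band_decomposition[OF atom \<open>0 \<le> p\<close>] by metis
    define r where "r = p - (\<Sum>j<k. \<beta> j *\<^sub>R e j)"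
    have "inf (lat_abs r) (e i) = 0" if i: "i < k" for i
    proof -
      have "r = (p - \<beta> i *\<^sub>R e i) + - (\<Sum>j\<in>{..<k} - {i}. \<beta> j *\<^sub>R e j)"
        unfolding r_def using i by (simp add: sum.remove)
      moreover have "inf (lat_abs (\<Sum>j\<in>{..<k} - {i}. \<beta> j *\<^sub>R e j)) (e i) = 0"
        using x i by (intro inf_lat_abs_sum_eq_0 inf_lat_abs_scaleR_eq_0 e0)
          (auto simp: e_def disj_nonzero_def lat_disjoint_def)
      ultimately show ?thesis
        using \<beta>[OF i] inf_lat_abs_add_eq_0[OF e0[of i], of "p - \<beta> i *\<^sub>R e i"
            "- (\<Sum>j\<in>{..<k} - {i}. \<beta> j *\<^sub>R e j)"]
        by (simp add: lat_abs_of_nonneg)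
    qed
    then have "r = 0"
      using disj_nonzero_extend[OF x, of r] maximal by (auto simp: lat_disjoint_def e_def)
    then show ?thesis
      unfolding r_def by (auto intro: span_sum span_scale span_base)
  qed
  have "y \<in> span (e ` {..<k})" for y
    by (metis pprt_minus_pprt_uminus pos span_diff zero_le_pprt)
  then show ?thesis by (auto simp: e_def)
qed

lemma infinite_dimensional_ex_disj_nonzero:
  fixes TX :: "'a::banach_lattice itself"
  assumes "infinite_dimensional TX"
  shows "\<exists>x::nat \<Rightarrow> 'a. disj_nonzero n x"
proof (rule ccontr)
  assume "\<nexists>x::nat \<Rightarrow> 'a. disj_nonzero n x"
  moreover have "\<exists>x::nat \<Rightarrow> 'a. disj_nonzero 0 x"
    by (simp add: disj_nonzero_def)
  ultimately obtain k where "\<exists>x::nat \<Rightarrow> 'a. disj_nonzero k x" and "\<nexists>y::nat \<Rightarrow> 'a. disj_nonzero (Suc k) y"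
    using ex_least_nat_less[of "\<lambda>k. \<nexists>x::nat \<Rightarrow> 'a. disj_nonzero k x" n] by blast
  then show False
    using disj_nonzero_maximal_span assms unfolding infinite_dimensional_def by blast
qed

section \<open>Relative decomposability and the spaces \<open>X\<^sub>L\<close>, \<open>Y\<^sub>U\<close>\<close>

lemma frakB_nonempty:
  fixes TX :: "'a::banach_lattice itself"
  assumes "infinite_dimensional TX"
  shows "frakB TX n \<noteq> {}"
proof -
  obtain x :: "nat \<Rightarrow> 'a" where x: "disj_nonzero n x"
    using infinite_dimensional_ex_disj_nonzero[OF assms] by blast
  have "(\<lambda>i. (1 / norm (x i)) *\<^sub>R x i) \<in> frakB TX n"
    using x unfolding frakB_def disj_nonzero_def by (auto intro: lat_disjoint_scaleR)
  then show ?thesis by blast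
qed

lemma s_comb_nonneg: "0 \<le> s_comb s n t"
  unfolding s_comb_def by (auto intro: Max_ge)

lemma rel_decomp_const_nonneg:
  fixes TX :: "'a::banach_lattice itself" and TY :: "'b::banach_lattice itself"
  assumes "infinite_dimensional TX" "infinite_dimensional TY" "rel_decomp_const TX TY s D"
  shows "0 \<le> D"
proof (rule ccontr)
  assume "\<not> 0 \<le> D"
  obtain x :: "nat \<Rightarrow> 'a" and y :: "nat \<Rightarrow> 'b" where x: "disj_nonzero 1 x" and y: "disj_nonzero 1 y"
    using infinite_dimensional_ex_disj_nonzero assms(1,2) by metis
  then have "0 < norm (y 0)"
    by (simp add: disj_nonzero_def)
  moreover have "norm (y 0) \<le> D * s_comb s 1 (\<lambda>i. norm (y i) / norm (x i)) * norm (x 0)"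
    using assms(3)[unfolded rel_decomp_const_def, rule_format, OF x y] by simp
  ultimately show False
    using \<open>\<not> 0 \<le> D\<close> s_comb_nonneg[of s 1] by (smt (verit) mult_nonpos_nonneg norm_ge_zero)
qed

lemma norm_lp_nonneg: "in_lp s b \<Longrightarrow> 0 \<le> norm_lp s b"
  unfolding in_lp_def norm_lp_def
  by (auto split: if_splits intro: order_trans[OF abs_ge_zero cSUP_upper[of 0 UNIV]])

lemma s_comb_cong:
  assumes "\<And>j. j < m \<Longrightarrow> t j = t' j"
  shows "s_comb s m t = s_comb s m t'"
proof -
  have "t ` {..<m} = t' ` {..<m}" "(\<Sum>j<m. t j powr r) = (\<Sum>j<m. t' j powr r)" for r
    using assms by (auto intro: image_cong sum.cong)
  then show ?thesis
    unfolding s_comb_def by simp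
qed

lemma s_comb_reindex_le_norm_lp:
  assumes b: "in_lp s b" and s: "1 \<le> s" and g: "inj_on g {..<m}"
  shows "s_comb s m (\<lambda>j. \<bar>b (g j)\<bar>) \<le> norm_lp s b"
proof (cases "s = \<infinity>")
  case True
  then have bdd: "bdd_above (range (\<lambda>i. \<bar>b i\<bar>))"
    using b by (simp add: in_lp_def)
  have "Max (insert 0 ((\<lambda>j. \<bar>b (g j)\<bar>) ` {..<m})) \<le> (SUP i. \<bar>b i\<bar>)"
    by (rule Max.boundedI)
      (auto intro: cSUP_upper[OF _ bdd] order_trans[OF abs_ge_zero cSUP_upper[OF _ bdd]])
  then show ?thesis
    using True by (simp add: s_comb_def norm_lp_def)
next
  case False
  with s obtain r where s_eq: "s = ereal r" and "1 \<le> r"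
    by (cases s) auto
  have "summable (\<lambda>i. \<bar>b i\<bar> powr r)"
    using b False s_eq by (simp add: in_lp_def)
  then have "(\<Sum>i\<in>g ` {..<m}. \<bar>b i\<bar> powr r) \<le> (\<Sum>i. \<bar>b i\<bar> powr r)"
    by (rule sum_le_suminf) auto
  then have "(\<Sum>j<m. \<bar>b (g j)\<bar> powr r) powr (1 / r) \<le> (\<Sum>i. \<bar>b i\<bar> powr r) powr (1 / r)"
    using \<open>1 \<le> r\<close> g by (intro powr_mono2) (auto simp: sum.reindex intro: sum_nonneg)
  then show ?thesis
    using s_eq by (simp add: s_comb_def norm_lp_def)
qed

lemma le_mult_cInf:
  fixes V :: "real set"
  assumes "V \<noteq> {}" "\<And>v. v \<in> V \<Longrightarrow> L \<le> K * v" "0 \<le> K"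
  shows "L \<le> K * Inf V"
proof (cases "K = 0")
  case False
  with assms have "L / K \<le> Inf V"
    by (intro cInf_greatest) (simp_all add: field_simps mult.commute)
  with False assms(3) show ?thesis
    by (simp add: field_simps mult.commute)
qed (use assms in auto)

lemma frakB_reindex_disj_nonzero:
  assumes x: "x \<in> frakB TX n" and g: "inj_on g {..<m}" "g ` {..<m} \<subseteq> {..<n}"
    and w: "\<And>j. j < m \<Longrightarrow> w (g j) \<noteq> 0"
  shows "disj_nonzero m (\<lambda>j. w (g j) *\<^sub>R x (g j))"
  unfolding disj_nonzero_def
proof (intro conjI allI impI)
  fix i assume "i < m"
  then have "norm (x (g i)) = 1"
    using x g(2) by (auto simp: frakB_def)
  with w[OF \<open>i < m\<close>] show "w (g i) *\<^sub>R x (g i) \<noteq> 0"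
    by auto
next
  fix i j assume "i < m" "j < m" "i \<noteq> j"
  then have "g i \<noteq> g j" "g i < n" "g j < n"
    using g by (auto simp: inj_on_eq_iff)
  then show "lat_disjoint (w (g i) *\<^sub>R x (g i)) (w (g j) *\<^sub>R x (g j))"
    using x by (intro lat_disjoint_scaleR) (simp add: frakB_def)
qed

text \<open>Terms with vanishing coefficient must be discarded, since relative decomposability
  only speaks about tuples of nonzero elements.\<close>

lemma norm_sum_le_rel_decomp_const:
  fixes TX :: "'a::banach_lattice itself" and TY :: "'b::banach_lattice itself"
  assumes D: "rel_decomp_const TX TY s D" "0 \<le> D"
    and b: "in_lp s b" and s: "1 \<le> s"
    and x: "x \<in> frakB TX n" and y: "y \<in> frakB TY n"
  shows "norm (\<Sum>i<n. (c i * b i) *\<^sub>R y i) \<le> D * norm_lp s b * norm (\<Sum>i<n. c i *\<^sub>R x i)"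
proof -
  define J where "J = {i. i < n \<and> c i * b i \<noteq> 0}"
  obtain g where g: "bij_betw g {..<card J} J"
    using ex_bij_betw_nat_finite[of J] by (auto simp: J_def atLeast0LessThan)
  define m where "m = card J"
  have g_inj: "inj_on g {..<m}" and gJ: "g ` {..<m} = J"
    using g by (simp_all add: m_def bij_betw_def)
  then have g_n: "g ` {..<m} \<subseteq> {..<n}" and g_nz: "\<And>j. j < m \<Longrightarrow> c (g j) * b (g j) \<noteq> 0"
    by (auto simp: J_def)
  define x' where "x' j = c (g j) *\<^sub>R x (g j)" for j
  define y' where "y' j = (c (g j) * b (g j)) *\<^sub>R y (g j)" for j
  have norms: "norm (x (g j)) = 1" "norm (y (g j)) = 1" if "j < m" for j
    using x y g_n that by (auto simp: frakB_def)
  have y_sum: "(\<Sum>j<m. y' j) = (\<Sum>i<n. (c i * b i) *\<^sub>R y i)"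
  proof -
    have "(\<Sum>j<m. y' j) = (\<Sum>i\<in>J. (c i * b i) *\<^sub>R y i)"
      unfolding y'_def using sum.reindex[OF g_inj, of "\<lambda>i. (c i * b i) *\<^sub>R y i"] gJ by simp
    also have "\<dots> = (\<Sum>i<n. (c i * b i) *\<^sub>R y i)"
      by (intro sum.mono_neutral_left) (auto simp: J_def)
    finally show ?thesis .
  qed
  have x': "disj_nonzero m x'"
    unfolding x'_def using g_nz by (intro frakB_reindex_disj_nonzero[OF x g_inj g_n, where w = c]) simp
  have y': "disj_nonzero m y'"
    unfolding y'_def using g_nz by (intro frakB_reindex_disj_nonzero[OF y g_inj g_n, where w = "\<lambda>i. c i * b i"])
  have "norm (\<Sum>i<n. (c i * b i) *\<^sub>R y i) \<le> D * s_comb s m (\<lambda>j. norm (y' j) / norm (x' j)) * norm (\<Sum>j<m. x' j)"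
    using D(1)[unfolded rel_decomp_const_def, rule_format, OF x' y'] by (simp only: y_sum)
  also have "\<dots> \<le> D * norm_lp s b * norm (\<Sum>i<n. c i *\<^sub>R x i)"
  proof (intro mult_mono mult_left_mono)
    have "s_comb s m (\<lambda>j. norm (y' j) / norm (x' j)) = s_comb s m (\<lambda>j. \<bar>b (g j)\<bar>)"
      using g_nz norms by (intro s_comb_cong) (simp add: x'_def y'_def abs_mult)
    also have "\<dots> \<le> norm_lp s b"
      using b s g_inj by (rule s_comb_reindex_le_norm_lp)
    finally show "s_comb s m (\<lambda>j. norm (y' j) / norm (x' j)) \<le> norm_lp s b" .
    have "(\<Sum>j<m. x' j) = (\<Sum>i\<in>J. c i *\<^sub>R x i)"
      unfolding x'_def using sum.reindex[OF g_inj, of "\<lambda>i. c i *\<^sub>R x i"] gJ by simp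
    also have "norm \<dots> \<le> norm (\<Sum>i<n. c i *\<^sub>R x i)"
      using x by (intro norm_sum_le_norm_sum_disjoint) (auto simp: frakB_def J_def)
    finally show "norm (\<Sum>j<m. x' j) \<le> norm (\<Sum>i<n. c i *\<^sub>R x i)" .
  qed (use D(2) norm_lp_nonneg[OF b] s_comb_nonneg in auto)
  finally show ?thesis .
qed

lemma norm_sum_le_Phi_n:
  fixes TX :: "'a::banach_lattice itself" and TY :: "'b::banach_lattice itself"
  assumes D: "rel_decomp_const TX TY s D" "0 \<le> D"
    and b: "in_lp s b" and s: "1 \<le> s" and X: "infinite_dimensional TX"
    and y: "y \<in> frakB TY n"
  shows "norm (\<Sum>i<n. (c i * b i) *\<^sub>R y i) \<le> D * norm_lp s b * Phi_n TX n c"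
  unfolding Phi_n_def
  using frakB_nonempty[OF X] norm_sum_le_rel_decomp_const[OF D b s _ y] D(2) norm_lp_nonneg[OF b]
  by (intro le_mult_cInf) auto

lemma XL_n_decompositions_nonempty:
  "{\<Sum>k\<in>F. Phi_n TX n (c k) |F c. finite (F::nat set) \<and> (\<forall>i<n. a i = (\<Sum>k\<in>F. c k i))} \<noteq> {}"
proof -
  have "(\<Sum>k\<in>{0::nat}. Phi_n TX n ((\<lambda>_. a) k)) \<in>
      {\<Sum>k\<in>F. Phi_n TX n (c k) |F c. finite (F::nat set) \<and> (\<forall>i<n. a i = (\<Sum>k\<in>F. c k i))}"
    by (intro CollectI exI[of _ "{0::nat}"] exI[of _ "\<lambda>_. a"]) auto
  then show ?thesis by blast
qed

lemma XL_n_nonneg: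
  fixes TX :: "'a::banach_lattice itself"
  assumes "infinite_dimensional TX"
  shows "0 \<le> XL_n TX n a"
proof -
  have "0 \<le> Phi_n TX n c" for c
    unfolding Phi_n_def by (rule cINF_greatest[OF frakB_nonempty[OF assms]]) simp
  then show ?thesis
    unfolding XL_n_def using XL_n_decompositions_nonempty
    by (intro cInf_greatest) (auto intro: sum_nonneg)
qed

lemma norm_sum_le_XL_n:
  fixes TX :: "'a::banach_lattice itself" and TY :: "'b::banach_lattice itself"
  assumes D: "rel_decomp_const TX TY s D" "0 \<le> D"
    and b: "in_lp s b" and s: "1 \<le> s" and X: "infinite_dimensional TX"
    and y: "y \<in> frakB TY n"
  shows "norm (\<Sum>i<n. (a i * b i) *\<^sub>R y i) \<le> D * norm_lp s b * XL_n TX n a"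
  unfolding XL_n_def
proof (rule le_mult_cInf[OF XL_n_decompositions_nonempty])
  fix v assume "v \<in> {\<Sum>k\<in>F. Phi_n TX n (c k) |F c. finite (F::nat set) \<and> (\<forall>i<n. a i = (\<Sum>k\<in>F. c k i))}"
  then obtain F :: "nat set" and c where v: "v = (\<Sum>k\<in>F. Phi_n TX n (c k))"
    and a: "\<forall>i<n. a i = (\<Sum>k\<in>F. c k i)" by blast
  have "(\<Sum>i<n. (a i * b i) *\<^sub>R y i) = (\<Sum>k\<in>F. \<Sum>i<n. (c k i * b i) *\<^sub>R y i)"
    using a by (simp add: sum.swap[of _ F] sum_distrib_right scaleR_sum_left)
  then have "norm (\<Sum>i<n. (a i * b i) *\<^sub>R y i) \<le> (\<Sum>k\<in>F. norm (\<Sum>i<n. (c k i * b i) *\<^sub>R y i))"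
    by (simp add: norm_sum)
  also have "\<dots> \<le> (\<Sum>k\<in>F. D * norm_lp s b * Phi_n TX n (c k))"
    by (intro sum_mono norm_sum_le_Phi_n[OF D b s X y])
  finally show "norm (\<Sum>i<n. (a i * b i) *\<^sub>R y i) \<le> D * norm_lp s b * v"
    by (simp add: v sum_distrib_left)
qed (use D(2) norm_lp_nonneg[OF b] in simp)

lemma XL_n_le_norm_XL: "in_XL TX a \<Longrightarrow> XL_n TX n a \<le> norm_XL TX a"
  unfolding in_XL_def norm_XL_def by (rule cSUP_upper) auto

lemma norm_XU_le_rel_decomp_const:
  fixes TX :: "'a::banach_lattice itself" and TY :: "'b::banach_lattice itself"
  assumes X: "infinite_dimensional TX" and Y: "infinite_dimensional TY"
    and D: "rel_decomp_const TX TY s D"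
    and s: "1 \<le> s" and a: "in_XL TX a" and b: "in_lp s b"
  shows "in_XU TY (\<lambda>i. a i * b i) \<and>
    norm_XU TY (\<lambda>i. a i * b i) \<le> D * norm_lp s b * norm_XL TX a"
proof -
  have "0 \<le> D * norm_lp s b"
    using rel_decomp_const_nonneg[OF X Y D] norm_lp_nonneg[OF b] by simp
  then have "XU_n TY n (\<lambda>i. a i * b i) \<le> D * norm_lp s b * norm_XL TX a" for n
    unfolding XU_n_def using frakB_nonempty[OF Y]
    by (intro cSUP_least order_trans[OF norm_sum_le_XL_n[OF D _ b s X]]
        mult_left_mono XL_n_le_norm_XL[OF a] rel_decomp_const_nonneg[OF X Y D])
  then show ?thesis
    unfolding in_XU_def norm_XU_def by (meson bdd_aboveI2 cSUP_least UNIV_not_empty)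
qed

theorem mainTheorem10:
  fixes TX :: "'a::banach_lattice itself" and TY :: "'b::banach_lattice itself"
    and s :: ereal and a b :: "nat \<Rightarrow> real"
  assumes "infinite_dimensional TX" and "infinite_dimensional TY"
    and "1 \<le> s"
    and "rel_s_decomposable TX TY s"
    and "in_XL TX a" and "in_lp s b"
  shows "in_XU TY (\<lambda>i. a i * b i)
    \<and> norm_XU TY (\<lambda>i. a i * b i) \<le> D_s TX TY s * norm_lp s b * norm_XL TX a"
proof -
  have bound: "in_XU TY (\<lambda>i. a i * b i) \<and> norm_XU TY (\<lambda>i. a i * b i) \<le> norm_lp s b * norm_XL TX a * D"
    if "rel_decomp_const TX TY s D" for D
    using norm_XU_le_rel_decomp_const[OF assms(1,2) that assms(3,5,6)] by (simp add: mult_ac)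
  have nonempty: "{D. rel_decomp_const TX TY s D} \<noteq> {}"
    using assms(4) by (auto simp: rel_s_decomposable_def)
  have "0 \<le> norm_lp s b * norm_XL TX a"
    using norm_lp_nonneg[OF assms(6)] XL_n_nonneg[OF assms(1)] XL_n_le_norm_XL[OF assms(5)]
    by (meson mult_nonneg_nonneg order_trans)
  then have "norm_XU TY (\<lambda>i. a i * b i) \<le> norm_lp s b * norm_XL TX a * D_s TX TY s"
    unfolding D_s_def using nonempty bound by (intro le_mult_cInf) auto
  with nonempty bound show ?thesis
    by (auto simp: mult_ac)
qed

end
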